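(* Let $M$ be $\mathbb{E}^2$, $\mathbb{S}^2$ or $\mathbb{H}^2$ with constant curvature $k$ (so $k=0$, $k>0$, $k<0$ respectively). Let $K\subset M$ be a compact region with $C^2$ boundary $\partial K$, and let $\kappa_g$ be the geodesic curvature of $\partial K$. Fix a point $O\in M$ and let $(\rho,\theta)$ be geodesic polar coordinates about $O$. Then the perimeter (length of $\partial K$) is $$\mathcal{P}=\int_{\partial K}\ell(\rho)^2\,\kappa_g\,d\theta+k\int_{\partial K}a(\rho)\,ds .$$
   Context: $\ell(\rho)=L(\rho)/2\pi$ and $a(\rho)=A(\rho)/2\pi$, where $L(\rho)$ and $A(\rho)$ are the circumference and area of a disk of radius $\rho$ in $M$: for $k>0$, $\ell(\rho)=\sin(\sqrt{k}\rho)/\sqrt{k}$, $a(\rho)=(1-\cos(\sqrt{k}\rho))/k$; for $k=0$, $\ell(\rho)=\rho$, $a(\rho)=\rho^2/2$; for $k<0$, $\ell(\rho)=\sinh(\sqrt{-k}\rho)/\sqrt{-k}$, $a(\rho)=(1-\cosh(\sqrt{-k}\rho))/k$. $\partial K$ is oriented positively (counterclockwise, $K$ on the left) and parametrized by arclength $s$, with unit tangent $T$ and outward unit normal $N$; $\kappa_g$ is defined by $\nabla_T T=-\kappa_g N$ (so $\kappa_g\ge 0$ on convex boundaries). The 1-form $\ell(\rho)^2\,d\theta$ extends smoothly across $O$ (and, on $\mathbb{S}^2$, across the point antipodal to $O$), and the first integral is that of this smooth 1-form times $\kappa_g$ along $\partial K$. *)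

theory Defs
  imports "HOL-Analysis.Analysis"
begin

text \<open>Models of the simply connected space form M of constant curvature k, embedded in R^3:
  k > 0: the sphere of radius 1/sqrt k (Euclidean ambient form);
  k < 0: the upper sheet of the hyperboloid x1^2+x2^2-x3^2 = 1/k (Minkowski ambient form);
  k = 0: the plane x3 = 0.  The Riemannian metric of M is the restriction of the ambient
  bilinear form bil k to tangent vectors.\<close>

definition sgnb :: "real \<Rightarrow> real" where
  "sgnb k = (if k < 0 then -1 else 1)"

definition bil :: "real \<Rightarrow> real^3 \<Rightarrow> real^3 \<Rightarrow> real" where
  "bil k u v = u$1 * v$1 + u$2 * v$2 + sgnb k * (u$3 * v$3)"

definition model :: "real \<Rightarrow> (real^3) set" where
  "model k = (if k > 0 then {p. bil k p p = 1 / k}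
              else if k < 0 then {p. bil k p p = 1 / k \<and> p$3 > 0}
              else {p. p$3 = 0})"

definition unit_normal :: "real \<Rightarrow> real^3 \<Rightarrow> real^3" where
  "unit_normal k p = (if k = 0 then axis 3 1 else sqrt \<bar>k\<bar> *\<^sub>R p)"

text \<open>Cross product adapted to bil k: bil k (lcross k a b) x = det(a,b,x).\<close>
definition lcross :: "real \<Rightarrow> real^3 \<Rightarrow> real^3 \<Rightarrow> real^3" where
  "lcross k a b = (\<chi> i. (if i = 3 then sgnb k else 1) * (cross3 a b) $ i)"

text \<open>Rotation by +90 degrees in the oriented tangent plane T_p M.\<close>
definition rot90 :: "real \<Rightarrow> real^3 \<Rightarrow> real^3 \<Rightarrow> real^3" where
  "rot90 k p v = lcross k (unit_normal k p) v"

definition tproj :: "real \<Rightarrow> real^3 \<Rightarrow> real^3 \<Rightarrow> real^3" where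
  "tproj k Oc w = w - (bil k (unit_normal k Oc) w / bil k (unit_normal k Oc) (unit_normal k Oc))
                       *\<^sub>R unit_normal k Oc"

definition geod_dist :: "real \<Rightarrow> real^3 \<Rightarrow> real^3 \<Rightarrow> real" where
  "geod_dist k Oc p = (if k > 0 then arccos (k * bil k Oc p) / sqrt k
                      else if k < 0 then arcosh (k * bil k Oc p) / sqrt (- k)
                      else norm (p - Oc))"

definition expM :: "real \<Rightarrow> real^3 \<Rightarrow> real^3 \<Rightarrow> real \<Rightarrow> real^3" where
  "expM k p v t = (if k > 0 then cos (sqrt k * t) *\<^sub>R p + (sin (sqrt k * t) / sqrt k) *\<^sub>R v
                   else if k < 0 then cosh (sqrt (- k) * t) *\<^sub>R p + (sinh (sqrt (- k) * t) / sqrt (- k)) *\<^sub>R v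
                   else p + t *\<^sub>R v)"

text \<open>ell(rho) = L(rho)/2pi and a(rho) = A(rho)/2pi.\<close>
definition ell :: "real \<Rightarrow> real \<Rightarrow> real" where
  "ell k \<rho> = (if k > 0 then sin (sqrt k * \<rho>) / sqrt k
              else if k < 0 then sinh (sqrt (- k) * \<rho>) / sqrt (- k) else \<rho>)"

definition area_fn :: "real \<Rightarrow> real \<Rightarrow> real" where
  "area_fn k \<rho> = (if k > 0 then (1 - cos (sqrt k * \<rho>)) / k
                  else if k < 0 then (1 - cosh (sqrt (- k) * \<rho>)) / k else \<rho>^2 / 2)"

definition tangent :: "(real \<Rightarrow> real^3) \<Rightarrow> real \<Rightarrow> real^3" where
  "tangent \<gamma> s = vector_derivative \<gamma> (at s)"

definition C2_curve :: "(real \<Rightarrow> real^3) \<Rightarrow> bool" where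
  "C2_curve \<gamma> \<longleftrightarrow> (\<forall>s. \<gamma> differentiable at s) \<and> (\<forall>s. tangent \<gamma> differentiable at s)
      \<and> continuous_on UNIV (\<lambda>s. vector_derivative (tangent \<gamma>) (at s))"

text \<open>Positive orientation: K lies on the left, i.e. the geodesic issuing from gamma s in the
  direction rot90 T enters the interior of K (relative to M).\<close>
definition positively_oriented :: "real \<Rightarrow> (real^3) set \<Rightarrow> (real \<Rightarrow> real^3) \<Rightarrow> bool" where
  "positively_oriented k K \<gamma> \<longleftrightarrow> (\<forall>s. \<exists>\<epsilon>>0. \<forall>t. 0 < t \<and> t < \<epsilon> \<longrightarrow>
      expM k (\<gamma> s) (rot90 k (\<gamma> s) (tangent \<gamma> s)) t \<in> (top_of_set (model k)) interior_of K)"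

text \<open>Outward unit normal N (for a positively oriented boundary curve) and geodesic curvature
  defined by nabla_T T = - kappa_g N (nabla_T T is the tangential part of gamma'').\<close>
definition outward_normal :: "real \<Rightarrow> (real \<Rightarrow> real^3) \<Rightarrow> real \<Rightarrow> real^3" where
  "outward_normal k \<gamma> s = - rot90 k (\<gamma> s) (tangent \<gamma> s)"

definition geod_curv :: "real \<Rightarrow> (real \<Rightarrow> real^3) \<Rightarrow> real \<Rightarrow> real" where
  "geod_curv k \<gamma> s = - bil k (vector_derivative (tangent \<gamma>) (at s)) (outward_normal k \<gamma> s)"

text \<open>The 1-form ell(rho)^2 d theta evaluated along gamma at the parameter s, where theta is the
  polar angle about Oc, i.e. the angle of w = exp_O^{-1}(gamma s), which points along the projection
  of gamma s - Oc onto T_O M: d theta = <J w, w'> / |w|^2.  (Undefined only at the finitely many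
  parameters with gamma s = Oc or its antipode, where the smooth extension is irrelevant for the
  integral.)\<close>
definition polar_form :: "real \<Rightarrow> real^3 \<Rightarrow> (real \<Rightarrow> real^3) \<Rightarrow> real \<Rightarrow> real" where
  "polar_form k Oc \<gamma> s =
     (let w = (\<lambda>t. tproj k Oc (\<gamma> t - Oc))
      in ell k (geod_dist k Oc (\<gamma> s)) ^ 2 *
         (bil k (rot90 k Oc (w s)) (vector_derivative w (at s)) / bil k (w s) (w s)))"

end

(* Along a closed unit speed curve in the model of M in R^3, with p = \<gamma> s, tangent T, outward
   normal N and acceleration \<gamma>'' = - \<kappa>_g N - k p, the derivative of <p - O, T> is
   1 + <p - O, \<gamma>''> = 1 - \<kappa>_g <p - O, N> - k <p - O, p>.  Here <p - O, N> ds is exactly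
   ell(\<rho>)^2 d\<theta>, and k <p - O, p> = k a(\<rho>) because cos (sqrt k \<rho>) = k <O, p> (cosh for k < 0).
   Integrating over a period gives the length of each boundary component. *)

theory Submission
  imports Defs
begin

unbundle cross3_syntax

section \<open>The bilinear form and the cross product\<close>

lemma sgnb_sq: "sgnb k * sgnb k = 1"
  by (simp add: sgnb_def)

interpretation bil: bounded_bilinear "bil k" for k
  unfolding bilinear_conv_bounded_bilinear[symmetric] bilinear_def
  by (auto intro!: linearI simp: bil_def algebra_simps)

lemmas bil_simps [simp] =
  bil.add_left bil.add_right bil.diff_left bil.diff_right bil.minus_left bil.minus_right
  bil.scaleR_left bil.scaleR_right bil.zero_left bil.zero_right

lemma bil_commute: "bil k u v = bil k v u"
  by (simp add: bil_def algebra_simps)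

lemma bil_eq_inner: "k \<ge> 0 \<Longrightarrow> bil k u v = u \<bullet> v"
  by (simp add: bil_def sgnb_def inner_vec_def sum_3)

lemma bil_lcross: "bil k (lcross k a b) c = (a \<times> b) \<bullet> c"
  by (simp add: bil_def lcross_def inner_vec_def sum_3 sgnb_sq mult.assoc[symmetric])

lemma bil_lcross_gram:
  "bil k (lcross k a b) c * bil k (lcross k d e) f =
   sgnb k * (bil k a d * (bil k b e * bil k c f - bil k b f * bil k c e)
           - bil k a e * (bil k b d * bil k c f - bil k b f * bil k c d)
           + bil k a f * (bil k b d * bil k c e - bil k b e * bil k c d))"
proof -
  have lcross_nth: "lcross k a b $ 1 = a$2*b$3 - a$3*b$2" "lcross k a b $ 2 = a$3*b$1 - a$1*b$3"
    "lcross k a b $ 3 = sgnb k * (a$1*b$2 - a$2*b$1)" for a b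
    by (simp_all add: lcross_def cross3_def vector_def)
  show ?thesis
    unfolding bil_def lcross_nth using sgnb_sq[of k] by algebra
qed

lemma rot90_chord: "rot90 k Q (p - Q) = rot90 k p (p - Q)"
  unfolding rot90_def unit_normal_def lcross_def
  by (simp add: cross_mult_left Cross3.right_diff_distrib cross_skew[of p Q])

lemma bil_rot90_skew: "bil k (rot90 k p x) y = - bil k x (rot90 k p y)"
  unfolding rot90_def bil_lcross bil_commute[of k x] by (simp add: cross3_simps)

lemma bil_rot90_tproj: "bil k (rot90 k Q (tproj k Q x)) (tproj k Q y) = bil k (rot90 k Q x) y"
  unfolding rot90_def bil_lcross tproj_def
  by (simp add: Cross3.right_diff_distrib cross_mult_right inner_diff_right dot_cross_self)

section \<open>Geodesic polar coordinates\<close>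

lemma bil_model_self: "p \<in> model k \<Longrightarrow> k \<noteq> 0 \<Longrightarrow> bil k p p = 1 / k"
  by (auto simp: model_def split: if_splits)

lemma bil_unit_normal_self:
  assumes "p \<in> model k"
  shows "bil k (unit_normal k p) (unit_normal k p) = sgnb k"
proof (cases "k = 0")
  case True
  then show ?thesis by (simp add: unit_normal_def bil_def sgnb_def axis_def)
next
  case False
  then show ?thesis
    using bil_model_self[OF assms False] by (simp add: unit_normal_def sgnb_def abs_if)
qed

lemma bil_unit_normal_chord:
  assumes "p \<in> model k" "Q \<in> model k"
  shows "bil k (unit_normal k p) (p - Q) = bil k (unit_normal k Q) (Q - p)"
proof (cases "k = 0")
  case True
  then show ?thesis using assms by (simp add: unit_normal_def bil_def model_def axis_def)
next
  case False
  then show ?thesis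
    using bil_model_self[OF assms(1) False] bil_model_self[OF assms(2) False]
    by (simp add: unit_normal_def bil_commute[of k Q p])
qed

lemma bounded_linear_tproj: "bounded_linear (tproj k Q)"
  unfolding linear_conv_bounded_linear[symmetric]
  by (rule linearI) (simp_all add: tproj_def algebra_simps add_divide_distrib)

lemma bil_tproj_self:
  assumes "Q \<in> model k"
  shows "bil k (tproj k Q x) (tproj k Q x) = bil k x x - sgnb k * (bil k (unit_normal k Q) x)\<^sup>2"
proof -
  define n where "n = unit_normal k Q"
  have nn: "bil k n n = sgnb k" using bil_unit_normal_self[OF assms] by (simp add: n_def)
  have tp: "tproj k Q x = x - (sgnb k * bil k n x) *\<^sub>R n"
    using nn by (simp add: tproj_def flip: n_def) (simp add: sgnb_def)
  have "bil k (tproj k Q x) (tproj k Q x)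
      = bil k x x - 2 * sgnb k * (bil k n x)\<^sup>2 + (sgnb k * sgnb k) * sgnb k * (bil k n x)\<^sup>2"
    unfolding tp by (simp add: nn bil_commute[of k x n] power2_eq_square algebra_simps)
  then show ?thesis by (simp add: sgnb_sq n_def)
qed

text \<open>Parseval's identity in the frame t, J t, n of R^3, orthonormal for bil k.\<close>
lemma bil_rot90_frame:
  assumes p: "p \<in> model k" and tt: "bil k t t = 1" and nt: "bil k (unit_normal k p) t = 0"
  shows "bil k x (rot90 k p t) * bil k y (rot90 k p t)
       = bil k x y - bil k x t * bil k y t - sgnb k * bil k x (unit_normal k p) * bil k y (unit_normal k p)"
proof -
  define n where "n = unit_normal k p"
  have "bil k x (rot90 k p t) * bil k y (rot90 k p t) = bil k (lcross k n t) x * bil k (lcross k n t) y"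
    by (simp add: rot90_def n_def bil_commute[of k x] bil_commute[of k y])
  also have "\<dots> = sgnb k * (sgnb k * (bil k x y - bil k y t * bil k x t) - bil k y n * bil k x n)"
    unfolding bil_lcross_gram using bil_unit_normal_self[OF p] tt nt
    by (simp flip: n_def add: bil_commute[of k t y] bil_commute[of k t n] bil_commute[of k n y])
  also have "\<dots> = bil k x y - bil k x t * bil k y t - sgnb k * bil k x n * bil k y n"
    using sgnb_sq[of k] by algebra
  finally show ?thesis by (simp add: n_def)
qed

lemma cos_geod_dist:
  assumes k: "k > 0" and "Q \<in> model k" "p \<in> model k"
  shows "cos (sqrt k * geod_dist k Q p) = k * bil k Q p"
proof -
  have norm: "norm x = sqrt (1 / k)" if "x \<in> model k" for x
    using bil_model_self[OF that] k by (simp add: bil_eq_inner norm_eq_sqrt_inner)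
  have "\<bar>bil k Q p\<bar> \<le> 1 / k"
    using Cauchy_Schwarz_ineq2[of Q p] k norm assms by (simp add: bil_eq_inner)
  then have "\<bar>k * bil k Q p\<bar> \<le> 1"
    using k by (simp add: abs_mult field_simps)
  then show ?thesis
    using k by (simp add: geod_dist_def)
qed

lemma cosh_geod_dist:
  assumes k: "k < 0" and Q: "Q \<in> model k" and p: "p \<in> model k"
  shows "cosh (sqrt (- k) * geod_dist k Q p) = k * bil k Q p"
proof -
  have s: "sgnb k = -1" using k by (simp add: sgnb_def)
  define c where "c = - 1 / k"
  have c: "c > 0" using k by (simp add: c_def)
  \<comment> \<open>reverse Cauchy-Schwarz inequality on the upper sheet, via Lagrange's identity\<close>
  have Q3: "(Q$3)\<^sup>2 = c + (Q$1)\<^sup>2 + (Q$2)\<^sup>2" and p3: "(p$3)\<^sup>2 = c + (p$1)\<^sup>2 + (p$2)\<^sup>2"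
    using bil_model_self[OF Q] bil_model_self[OF p] k
    unfolding bil_def s c_def by (simp_all add: power2_eq_square)
  have "(c + (Q$1)\<^sup>2 + (Q$2)\<^sup>2) * (c + (p$1)\<^sup>2 + (p$2)\<^sup>2) - (c + Q$1*p$1 + Q$2*p$2)\<^sup>2
     = c * ((Q$1 - p$1)\<^sup>2 + (Q$2 - p$2)\<^sup>2) + (Q$1*p$2 - Q$2*p$1)\<^sup>2"
    by algebra
  then have "(c + Q$1*p$1 + Q$2*p$2)\<^sup>2 \<le> (Q$3 * p$3)\<^sup>2"
    unfolding power_mult_distrib Q3 p3 using c by (smt (verit) mult_nonneg_nonneg zero_le_power2)
  moreover have "Q$3 * p$3 > 0" using Q p k by (simp add: model_def)
  ultimately have "c + Q$1*p$1 + Q$2*p$2 \<le> Q$3 * p$3"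
    by (smt (verit) power2_le_imp_le)
  then have "bil k Q p \<le> 1 / k" unfolding bil_def s c_def by simp
  then have "1 \<le> k * bil k Q p"
    using mult_left_mono_neg[of "bil k Q p" "1 / k" k] k by simp
  then show ?thesis
    using k by (simp add: geod_dist_def)
qed

lemma ell_sq_geod_dist:
  assumes Q: "Q \<in> model k" and p: "p \<in> model k"
  shows "(ell k (geod_dist k Q p))\<^sup>2 = bil k (tproj k Q (p - Q)) (tproj k Q (p - Q))"
proof (cases "k = 0")
  case True
  have "bil k (unit_normal k Q) (p - Q) = 0"
    using True Q p by (simp add: unit_normal_def bil_def axis_def model_def)
  moreover have "(ell 0 (geod_dist 0 Q p))\<^sup>2 = bil 0 (p - Q) (p - Q)"
    by (simp add: ell_def geod_dist_def bil_eq_inner power2_norm_eq_inner inner_diff_left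
        inner_diff_right inner_commute)
  ultimately show ?thesis
    unfolding bil_tproj_self[OF Q] using True by simp
next
  case False
  define b where "b = bil k Q p"
  have "bil k (tproj k Q (p - Q)) (tproj k Q (p - Q))
      = bil k (p - Q) (p - Q) - sgnb k * (sqrt \<bar>k\<bar> * (b - 1 / k))\<^sup>2"
    using False bil_model_self[OF Q False]
    by (simp add: bil_tproj_self[OF Q] unit_normal_def b_def algebra_simps)
  also have "\<dots> = bil k (p - Q) (p - Q) - k * (b - 1 / k)\<^sup>2"
    by (simp add: power_mult_distrib sgnb_def)
  also have "\<dots> = 1 / k - k * b\<^sup>2"
    using False bil_model_self[OF Q False] bil_model_self[OF p False]
    by (simp add: b_def bil_commute[of k p Q] power2_eq_square field_simps)
  also have "\<dots> = (ell k (geod_dist k Q p))\<^sup>2"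
  proof (cases "k > 0")
    case True
    have "(ell k (geod_dist k Q p))\<^sup>2 = (1 - (cos (sqrt k * geod_dist k Q p))\<^sup>2) / k"
      using True by (simp add: ell_def power_divide sin_squared_eq)
    then show ?thesis
      using True by (simp add: cos_geod_dist[OF True Q p] b_def power2_eq_square field_simps)
  next
    case False
    then have k: "k < 0" using \<open>k \<noteq> 0\<close> by simp
    have "(ell k (geod_dist k Q p))\<^sup>2 = ((cosh (sqrt (- k) * geod_dist k Q p))\<^sup>2 - 1) / (- k)"
      using k by (simp add: ell_def power_divide sinh_square_eq)
    then show ?thesis
      using k by (simp add: cosh_geod_dist[OF k Q p] b_def power2_eq_square field_simps)
  qed
  finally show ?thesis ..
qed

lemma area_fn_geod_dist:
  assumes Q: "Q \<in> model k" and p: "p \<in> model k"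
  shows "k * area_fn k (geod_dist k Q p) = k * bil k (p - Q) p"
proof (cases "k > 0")
  case True
  then show ?thesis
    using cos_geod_dist[OF True Q p] bil_model_self[OF p] by (simp add: area_fn_def field_simps)
next
  case False
  then consider "k < 0" | "k = 0" by linarith
  then show ?thesis
  proof cases
    case 1
    then show ?thesis
      using cosh_geod_dist[OF 1 Q p] bil_model_self[OF p] by (simp add: area_fn_def field_simps)
  qed simp
qed

section \<open>Unit speed curves in M\<close>

definition acceleration :: "(real \<Rightarrow> real^3) \<Rightarrow> real \<Rightarrow> real^3" where
  "acceleration \<gamma> s = vector_derivative (tangent \<gamma>) (at s)"

lemma C2_curve_has_vector_derivative:
  assumes "C2_curve \<gamma>"
  shows "(\<gamma> has_vector_derivative tangent \<gamma> s) (at s)"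
    and "(tangent \<gamma> has_vector_derivative acceleration \<gamma> s) (at s)"
  using assms by (simp_all add: C2_curve_def tangent_def acceleration_def vector_derivative_works)

lemma has_real_derivative_of_constant_eq_0:
  assumes "(f has_real_derivative D) (at x)" "\<And>y. f y = c"
  shows "D = 0"
proof -
  have "f = (\<lambda>_. c)" using assms(2) by auto
  then show ?thesis using assms(1) DERIV_const DERIV_unique by metis
qed

lemma has_real_derivative_bil:
  assumes "(f has_vector_derivative f') (at x)" "(g has_vector_derivative g') (at x)"
  shows "((\<lambda>x. bil k (f x) (g x)) has_real_derivative bil k f' (g x) + bil k (f x) g') (at x)"
  using bil.has_vector_derivative[OF assms]
  by (simp add: has_real_derivative_iff_has_vector_derivative add.commute)

lemma has_real_derivative_nth:
  "(f has_vector_derivative f') (at x) \<Longrightarrow> ((\<lambda>x. f x $ i) has_real_derivative f' $ i) (at x)"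
  using bounded_linear.has_vector_derivative[OF bounded_linear_vec_nth]
  by (simp add: has_real_derivative_iff_has_vector_derivative)

lemma bil_tangent_acceleration:
  assumes "C2_curve \<gamma>" "\<forall>s. bil k (tangent \<gamma> s) (tangent \<gamma> s) = 1"
  shows "bil k (tangent \<gamma> s) (acceleration \<gamma> s) = 0"
proof -
  note dT = C2_curve_has_vector_derivative(2)[OF assms(1)]
  have "bil k (acceleration \<gamma> s) (tangent \<gamma> s) + bil k (tangent \<gamma> s) (acceleration \<gamma> s) = 0"
    by (rule has_real_derivative_of_constant_eq_0[OF has_real_derivative_bil[OF dT dT]])
      (use assms(2) in blast)
  then show ?thesis by (simp add: bil_commute[of k "acceleration \<gamma> s"])
qed

lemma bil_unit_normal_tangent:
  assumes "C2_curve \<gamma>" "\<forall>s. \<gamma> s \<in> model k"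
  shows "bil k (unit_normal k (\<gamma> s)) (tangent \<gamma> s) = 0"
proof (cases "k = 0")
  case True
  have "((\<lambda>x. \<gamma> x $ 3) has_real_derivative tangent \<gamma> s $ 3) (at s)"
    by (rule has_real_derivative_nth[OF C2_curve_has_vector_derivative(1)[OF assms(1)]])
  then have "tangent \<gamma> s $ 3 = 0"
    by (rule has_real_derivative_of_constant_eq_0) (use assms True in \<open>simp add: model_def\<close>)
  then show ?thesis using True by (simp add: unit_normal_def bil_def axis_def)
next
  case False
  note dg = C2_curve_has_vector_derivative(1)[OF assms(1)]
  have "bil k (tangent \<gamma> s) (\<gamma> s) + bil k (\<gamma> s) (tangent \<gamma> s) = 0"
    using assms(2) bil_model_self False
    by (intro has_real_derivative_of_constant_eq_0[OF has_real_derivative_bil[OF dg dg]]) blast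
  then show ?thesis using False by (simp add: unit_normal_def bil_commute[of k "tangent \<gamma> s"])
qed

text \<open>As bil k n n = sgnb k for the unit normal n, the left-hand side is the component of the
  acceleration normal to M.\<close>
lemma normal_acceleration:
  assumes "C2_curve \<gamma>" "\<forall>s. \<gamma> s \<in> model k" "\<forall>s. bil k (tangent \<gamma> s) (tangent \<gamma> s) = 1"
  shows "(sgnb k * bil k (unit_normal k (\<gamma> s)) (acceleration \<gamma> s)) *\<^sub>R unit_normal k (\<gamma> s)
       = - k *\<^sub>R \<gamma> s"
proof (cases "k = 0")
  case True
  have "\<forall>s. tangent \<gamma> s $ 3 = 0"
    using bil_unit_normal_tangent[OF assms(1,2)] True
    by (simp add: unit_normal_def bil_def axis_def sgnb_def)
  moreover have "((\<lambda>x. tangent \<gamma> x $ 3) has_real_derivative acceleration \<gamma> s $ 3) (at s)"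
    by (rule has_real_derivative_nth[OF C2_curve_has_vector_derivative(2)[OF assms(1)]])
  ultimately have "acceleration \<gamma> s $ 3 = 0"
    using has_real_derivative_of_constant_eq_0 by blast
  then show ?thesis using True by (simp add: unit_normal_def bil_def axis_def)
next
  case False
  note d = C2_curve_has_vector_derivative[OF assms(1)]
  have "\<forall>s. bil k (\<gamma> s) (tangent \<gamma> s) = 0"
    using bil_unit_normal_tangent[OF assms(1,2)] False by (simp add: unit_normal_def)
  then have "bil k (tangent \<gamma> s) (tangent \<gamma> s) + bil k (\<gamma> s) (acceleration \<gamma> s) = 0"
    by (intro has_real_derivative_of_constant_eq_0[OF has_real_derivative_bil[OF d]]) blast
  then have "bil k (\<gamma> s) (acceleration \<gamma> s) = -1"
    using assms(3) by simp
  then show ?thesis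
    using False by (simp add: unit_normal_def sgnb_def abs_if)
qed

lemma tangent_periodic:
  assumes "C2_curve \<gamma>" "\<forall>s. \<gamma> (s + L) = \<gamma> s"
  shows "tangent \<gamma> (s + L) = tangent \<gamma> s"
proof -
  note dg = C2_curve_has_vector_derivative(1)[OF assms(1)]
  have "((\<gamma> \<circ> (\<lambda>x. x + L)) has_vector_derivative (1 *\<^sub>R tangent \<gamma> (s + L))) (at s)"
    by (rule vector_diff_chain_at) (auto intro!: derivative_eq_intros dg)
  moreover have "\<gamma> \<circ> (\<lambda>x. x + L) = \<gamma>" using assms(2) by (auto simp: o_def)
  ultimately show ?thesis
    using vector_derivative_unique_at[OF _ dg[of s]] by simp
qed

lemma polar_form_eq_bil_outward_normal:
  assumes Q: "Q \<in> model k" and p: "\<gamma> s \<in> model k" and "\<gamma> differentiable at s"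
    and tt: "bil k (tangent \<gamma> s) (tangent \<gamma> s) = 1"
    and nt: "bil k (unit_normal k (\<gamma> s)) (tangent \<gamma> s) = 0"
  shows "polar_form k Q \<gamma> s = bil k (\<gamma> s - Q) (outward_normal k \<gamma> s)"
proof -
  define x where "x = \<gamma> s - Q"
  define t where "t = tangent \<gamma> s"
  define B where "B = bil k (tproj k Q x) (tproj k Q x)"
  define X where "X = bil k x (outward_normal k \<gamma> s)"
  have "((\<lambda>r. \<gamma> r - Q) has_vector_derivative t) (at s)"
    using assms(3) by (auto simp: t_def tangent_def vector_derivative_works intro!: derivative_eq_intros)
  then have dw: "vector_derivative (\<lambda>r. tproj k Q (\<gamma> r - Q)) (at s) = tproj k Q t"
    by (intro vector_derivative_at bounded_linear.has_vector_derivative[OF bounded_linear_tproj])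
  have ell: "(ell k (geod_dist k Q (\<gamma> s)))\<^sup>2 = B"
    unfolding B_def x_def by (rule ell_sq_geod_dist[OF Q p])
  have "bil k (rot90 k Q (tproj k Q x)) (tproj k Q t) = bil k (rot90 k (\<gamma> s) x) t"
    by (simp add: bil_rot90_tproj x_def rot90_chord[of k Q "\<gamma> s"])
  also have "\<dots> = X"
    by (simp add: bil_rot90_skew X_def outward_normal_def t_def)
  finally have rot: "bil k (rot90 k Q (tproj k Q x)) (tproj k Q t) = X" .
  have "bil k (unit_normal k (\<gamma> s)) x = - bil k (unit_normal k Q) x"
    using bil_unit_normal_chord[OF p Q] by (simp add: x_def)
  then have "X\<^sup>2 = B - (bil k x t)\<^sup>2"
    using bil_rot90_frame[OF p tt nt, of x x, folded t_def]
    by (simp add: X_def B_def bil_tproj_self[OF Q] outward_normal_def power2_eq_square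
        bil_commute[of k x "unit_normal k (\<gamma> s)"] algebra_simps flip: t_def)
  \<comment> \<open>at p = O, and at the antipode of O, polar_form is 0 * (0 / 0) = 0; then X = 0 as well\<close>
  then have "B = 0 \<Longrightarrow> X = 0"
    by (smt (verit) zero_le_power2 zero_eq_power2)
  moreover have "polar_form k Q \<gamma> s = B * (X / B)"
    unfolding polar_form_def Let_def dw ell x_def[symmetric] t_def[symmetric] rot B_def[symmetric] ..
  ultimately show ?thesis
    by (cases "B = 0") (simp_all add: X_def x_def)
qed

lemma polar_form_mult_geod_curv:
  assumes Q: "Q \<in> model k" and C2: "C2_curve \<gamma>" and M: "\<forall>s. \<gamma> s \<in> model k"
    and unit: "\<forall>s. bil k (tangent \<gamma> s) (tangent \<gamma> s) = 1"
  shows "polar_form k Q \<gamma> s * geod_curv k \<gamma> s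
       = - bil k (\<gamma> s - Q) (acceleration \<gamma> s) - k * area_fn k (geod_dist k Q (\<gamma> s))"
proof -
  define x where "x = \<gamma> s - Q"
  define n where "n = unit_normal k (\<gamma> s)"
  define a where "a = acceleration \<gamma> s"
  have nt: "bil k n (tangent \<gamma> s) = 0"
    unfolding n_def by (rule bil_unit_normal_tangent[OF C2 M])
  have polar: "polar_form k Q \<gamma> s = bil k x (outward_normal k \<gamma> s)"
    unfolding x_def using Q C2 M unit nt C2_curve_has_vector_derivative(1)[OF C2]
    by (intro polar_form_eq_bil_outward_normal) (auto simp: n_def intro: differentiableI_vector)
  have curv: "geod_curv k \<gamma> s = - bil k a (outward_normal k \<gamma> s)"
    by (simp add: geod_curv_def a_def acceleration_def)
  have "bil k x (outward_normal k \<gamma> s) * bil k a (outward_normal k \<gamma> s)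
      = bil k x a - bil k x ((sgnb k * bil k n a) *\<^sub>R n)"
    using bil_rot90_frame[OF M[rule_format] unit[rule_format] nt[unfolded n_def], of x a]
      bil_tangent_acceleration[OF C2 unit, of s]
    unfolding a_def n_def outward_normal_def
    by (simp add: bil_commute[of k "acceleration \<gamma> s"] algebra_simps)
  also have "\<dots> = bil k x a + k * bil k x (\<gamma> s)"
    using normal_acceleration[OF C2 M unit, of s] by (simp add: n_def a_def)
  also have "k * bil k x (\<gamma> s) = k * area_fn k (geod_dist k Q (\<gamma> s))"
    unfolding x_def by (rule area_fn_geod_dist[OF Q M[rule_format], symmetric])
  finally show ?thesis
    unfolding polar curv by (simp add: a_def x_def)
qed

lemma closed_curve_length_eq_polar_integral:
  assumes Q: "Q \<in> model k" and L: "L > 0" and C2: "C2_curve \<gamma>" and M: "\<forall>s. \<gamma> s \<in> model k"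
    and per: "\<forall>s. \<gamma> (s + L) = \<gamma> s" and unit: "\<forall>s. bil k (tangent \<gamma> s) (tangent \<gamma> s) = 1"
  shows "integral {0..L} (\<lambda>s. polar_form k Q \<gamma> s * geod_curv k \<gamma> s)
       + k * integral {0..L} (\<lambda>s. area_fn k (geod_dist k Q (\<gamma> s))) = L"
proof -
  define f where "f s = polar_form k Q \<gamma> s * geod_curv k \<gamma> s" for s
  define A where "A s = k * area_fn k (geod_dist k Q (\<gamma> s))" for s
  define h where "h = (\<lambda>s. bil k (\<gamma> s - Q) (tangent \<gamma> s))"
  note d = C2_curve_has_vector_derivative[OF C2]
  have "(h has_real_derivative 1 - (f s + A s)) (at s)" for s
  proof -
    have "((\<lambda>r. \<gamma> r - Q) has_vector_derivative tangent \<gamma> s) (at s)"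
      using d(1) by (auto intro!: derivative_eq_intros)
    then have "(h has_real_derivative
        bil k (tangent \<gamma> s) (tangent \<gamma> s) + bil k (\<gamma> s - Q) (acceleration \<gamma> s)) (at s)"
      unfolding h_def by (rule has_real_derivative_bil[OF _ d(2)])
    moreover have "bil k (tangent \<gamma> s) (tangent \<gamma> s) + bil k (\<gamma> s - Q) (acceleration \<gamma> s)
        = 1 - (f s + A s)"
      using unit polar_form_mult_geod_curv[OF Q C2 M unit, of s] by (simp add: f_def A_def)
    ultimately show ?thesis by simp
  qed
  moreover have "h L = h 0"
    using per[rule_format, of 0] tangent_periodic[OF C2 per, of 0] by (simp add: h_def)
  ultimately have "((\<lambda>s. 1 - (f s + A s)) has_integral 0) {0..L}"
    using fundamental_theorem_of_calculus[of 0 L h "\<lambda>s. 1 - (f s + A s)"] L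
    by (simp add: has_real_derivative_iff_has_vector_derivative has_vector_derivative_at_within)
  from has_integral_diff[OF has_integral_const_real[of 1 0 L] this]
  have fA: "((\<lambda>s. f s + A s) has_integral L) {0..L}"
    using L by simp
  have "continuous_on {0..L} (\<lambda>s. k * bil k (\<gamma> s - Q) (\<gamma> s))"
    using d(1) by (intro continuous_at_imp_continuous_on ballI continuous_intros bil.continuous
        has_vector_derivative_continuous) auto
  moreover have "A = (\<lambda>s. k * bil k (\<gamma> s - Q) (\<gamma> s))"
    unfolding A_def using area_fn_geod_dist[OF Q M[rule_format]] by presburger
  ultimately have "A integrable_on {0..L}"
    by (simp add: integrable_continuous_interval)
  moreover from this have "f integrable_on {0..L}"
    using integrable_diff[OF has_integral_integrable[OF fA]] by fastforce
  ultimately have "integral {0..L} f + integral {0..L} A = L"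
    using integral_add integral_unique[OF fA] by metis
  then show ?thesis
    by (simp add: f_def[abs_def] A_def[abs_def])
qed

theorem theorem2p1:
  fixes k :: real and K :: "(real^3) set" and Oc :: "real^3"
    and n :: nat and \<gamma> :: "nat \<Rightarrow> real \<Rightarrow> real^3" and L :: "nat \<Rightarrow> real"
  assumes "Oc \<in> model k"
    and "K \<subseteq> model k" and "compact K"
    and "(top_of_set (model k)) closure_of ((top_of_set (model k)) interior_of K) = K"
    and "\<forall>i<n. L i > 0 \<and> C2_curve (\<gamma> i) \<and> (\<forall>s. \<gamma> i s \<in> model k)
               \<and> (\<forall>s. \<gamma> i (s + L i) = \<gamma> i s) \<and> inj_on (\<gamma> i) {0..<L i}
               \<and> (\<forall>s. bil k (tangent (\<gamma> i) s) (tangent (\<gamma> i) s) = 1)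
               \<and> positively_oriented k K (\<gamma> i)"
    and "\<forall>i<n. \<forall>j<n. i \<noteq> j \<longrightarrow> \<gamma> i ` {0..L i} \<inter> \<gamma> j ` {0..L j} = {}"
    and "(top_of_set (model k)) frontier_of K = (\<Union>i<n. \<gamma> i ` {0..L i})"
  shows "(\<Sum>i<n. L i) =
           (\<Sum>i<n. integral {0..L i} (\<lambda>s. polar_form k Oc (\<gamma> i) s * geod_curv k (\<gamma> i) s))
         + k * (\<Sum>i<n. integral {0..L i} (\<lambda>s. area_fn k (geod_dist k Oc (\<gamma> i s))))"
proof -
  have component: "integral {0..L i} (\<lambda>s. polar_form k Oc (\<gamma> i) s * geod_curv k (\<gamma> i) s)
        + k * integral {0..L i} (\<lambda>s. area_fn k (geod_dist k Oc (\<gamma> i s))) = L i" if "i < n" for i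
    using assms(5) that by (intro closed_curve_length_eq_polar_integral[OF assms(1)]) auto
  have "(\<Sum>i<n. L i) = (\<Sum>i<n. integral {0..L i} (\<lambda>s. polar_form k Oc (\<gamma> i) s * geod_curv k (\<gamma> i) s)
        + k * integral {0..L i} (\<lambda>s. area_fn k (geod_dist k Oc (\<gamma> i s))))"
    using component by (intro sum.cong) auto
  also have "\<dots> = (\<Sum>i<n. integral {0..L i} (\<lambda>s. polar_form k Oc (\<gamma> i) s * geod_curv k (\<gamma> i) s))
         + k * (\<Sum>i<n. integral {0..L i} (\<lambda>s. area_fn k (geod_dist k Oc (\<gamma> i s))))"
    by (simp add: sum.distrib sum_distrib_left)
  finally show ?thesis .
qed

end
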